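(* Fix $\varepsilon>0$ and a dataset $D=\{(x_i,y_i)\}_{i=1}^n$ with $x_i,y_i\in[0,1]$. With the noisy statistics and $\tilde n_x$ defined in the context, define $\hat S_{xy}:=\frac56\tilde S_{xy}+\frac16\bigl[\tilde n_x-(\tilde S_{(1-x)y}+\tilde S_{1-y})\bigr]$. Then $\hat S_{xy}$ is an unbiased estimator of $S_{xy}=\sum_i x_iy_i$ with variance $\mathrm{Var}(\hat S_{xy})=\frac{20}{3\varepsilon^2}$.
   Context: Let $\varepsilon_1=\varepsilon_2=\varepsilon/2$. Define the statistics $S_{x^2}=\sum_i x_i^2$, $S_{x-x^2}=\sum_i (x_i-x_i^2)$, $S_{1-x}=\sum_i(1-x_i)$, $S_{xy}=\sum_i x_iy_i$, $S_{(1-x)y}=\sum_i (1-x_i)y_i$, $S_{1-y}=\sum_i(1-y_i)$. Let $Z_{11},Z_{12},Z_{13}\stackrel{iid}{\sim}\mathrm{Lap}(1/\varepsilon_1)$ and $Z_{21},Z_{22},Z_{23}\stackrel{iid}{\sim}\mathrm{Lap}(1/\varepsilon_2)$, all six mutually independent, where $\mathrm{Lap}(b)$ is the zero-mean Laplace distribution with density $\frac{1}{2b}e^{-|z|/b}$. Set $\tilde S_{x^2}=S_{x^2}+Z_{11}$, $\tilde S_{x-x^2}=S_{x-x^2}+Z_{12}$, $\tilde S_{1-x}=S_{1-x}+Z_{13}$, $\tilde S_{xy}=S_{xy}+Z_{21}$, $\tilde S_{(1-x)y}=S_{(1-x)y}+Z_{22}$, $\tilde S_{1-y}=S_{1-y}+Z_{23}$,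 and $\tilde n_x=\tilde S_{x^2}+\tilde S_{x-x^2}+\tilde S_{1-x}$, $\tilde n_y=\tilde S_{xy}+\tilde S_{(1-x)y}+\tilde S_{1-y}$. The dataset is fixed; expectations and variances are over the noise. *)

theory Defs
  imports "HOL-Probability.Probability"
begin

definition laplace_density :: "real \<Rightarrow> real \<Rightarrow> real" where
  "laplace_density b z = exp (- \<bar>z\<bar> / b) / (2 * b)"

end

theory Submission
  imports Defs
begin

text \<open>Both \<open>n\<^sub>x\<close> and \<open>S_xy + S_(1-x)y + S_(1-y)\<close> equal \<open>n\<close>, so the noise-free part of the
  estimator is exactly \<open>S_xy\<close>: the estimator is \<open>S_xy\<close> plus the fixed combination
  \<open>5/6 Z\<^sub>2\<^sub>1 + 1/6 (Z\<^sub>1\<^sub>1 + Z\<^sub>1\<^sub>2 + Z\<^sub>1\<^sub>3 - Z\<^sub>2\<^sub>2 - Z\<^sub>2\<^sub>3)\<close> of the noise.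
  Laplace noise \<open>Lap(b)\<close> is centred with variance \<open>2b\<^sup>2\<close> (its moments follow by writing the density as
  the average of an exponential density and its reflection), so the estimator is unbiased and, by
  independence, its variance is \<open>(25/36 + 5/36) \<cdot> 2 (2/\<epsilon>)\<^sup>2 = 20/(3\<epsilon>\<^sup>2)\<close>.\<close>

lemma has_bochner_integral_exponential_moment:
  assumes "0 < (l::real)"
  shows "has_bochner_integral lborel (\<lambda>z. exponential_density l z * z ^ k) (fact k / l ^ k)"
proof (rule has_bochner_integral_nn_integral)
  show "(\<integral>\<^sup>+ z. ennreal (exponential_density l z * z ^ k) \<partial>lborel) = ennreal (fact k / l ^ k)"
    using nn_integral_erlang_ith_moment[OF assms, of 0 k] by simp
qed (use assms in \<open>auto simp: erlang_density_def\<close>)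

lemma laplace_density_split:
  assumes "0 < b" "z \<noteq> 0"
  shows "laplace_density b z = (exponential_density (1 / b) z + exponential_density (1 / b) (- z)) / 2"
  using assms by (cases "z < 0") (auto simp: laplace_density_def erlang_density_def)

lemma has_bochner_integral_laplace_moment:
  assumes "0 < b"
  shows "has_bochner_integral lborel (\<lambda>z. laplace_density b z * z ^ k) ((1 + (-1) ^ k) * fact k * b ^ k / 2)"
proof -
  define l where "l = 1 / b"
  have "0 < l" using assms by (simp add: l_def)
  note right = has_bochner_integral_exponential_moment[OF this, of k]
  have left: "has_bochner_integral lborel (\<lambda>z. exponential_density l (- z) * (- z) ^ k) (fact k / l ^ k)"
    using lborel_has_bochner_integral_real_affine_iff[where c="-1" and t=0, THEN iffD1, OF _ right]
    by simp
  have integral: "has_bochner_integral lborel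
      (\<lambda>z. (exponential_density l z * z ^ k + (-1) ^ k * (exponential_density l (- z) * (- z) ^ k)) / 2)
      ((1 + (-1) ^ k) * fact k * b ^ k / 2)"
  proof -
    have "(fact k / l ^ k + (-1) ^ k * (fact k / l ^ k)) / 2 = (1 + (-1) ^ k) * fact k * b ^ k / (2::real)"
      by (simp add: l_def power_one_over algebra_simps)
    moreover have "has_bochner_integral lborel
      (\<lambda>z. (exponential_density l z * z ^ k + (-1) ^ k * (exponential_density l (- z) * (- z) ^ k)) / 2)
      ((fact k / l ^ k + (-1) ^ k * (fact k / l ^ k)) / 2)"
      by (intro has_bochner_integral_divide_zero has_bochner_integral_add has_bochner_integral_mult_right left right)
    ultimately show ?thesis by (simp only:)
  qed
  \<comment> \<open>the two halves disagree with the Laplace density only at \<open>z = 0\<close>\<close>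
  have "AE z in lborel.
      (exponential_density l z * z ^ k + (-1) ^ k * (exponential_density l (- z) * (- z) ^ k)) / 2
      = laplace_density b z * z ^ k"
  proof (rule eventually_mono[OF AE_lborel_singleton[of 0]])
    fix z :: real
    assume "z \<noteq> 0"
    have "(-1) ^ k * (- z) ^ k = z ^ k" by (simp flip: power_mult_distrib)
    then have "(-1) ^ k * (exponential_density l (- z) * (- z) ^ k) = exponential_density l (- z) * z ^ k"
      by (metis mult.left_commute)
    then show "(exponential_density l z * z ^ k + (-1) ^ k * (exponential_density l (- z) * (- z) ^ k)) / 2
      = laplace_density b z * z ^ k"
      using laplace_density_split[OF assms \<open>z \<noteq> 0\<close>] by (simp add: l_def distrib_right add_divide_distrib)
  qed
  moreover have "(\<lambda>z. laplace_density b z * z ^ k) \<in> borel_measurable lborel"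
    unfolding laplace_density_def by measurable
  ultimately show ?thesis
    using has_bochner_integral_cong_AE[THEN iffD1, OF borel_measurable_has_bochner_integral[OF integral]]
      integral by blast
qed

lemma (in prob_space)
  assumes b: "0 < b" and X: "distributed M lborel X (\<lambda>z. ennreal (laplace_density b z))"
  shows laplace_distributed_integrable_power: "integrable M (\<lambda>\<omega>. X \<omega> ^ k)"
    and laplace_distributed_moment: "expectation (\<lambda>\<omega>. X \<omega> ^ k) = (1 + (-1) ^ k) * fact k * b ^ k / 2"
proof -
  have nonneg: "0 \<le> laplace_density b z" for z
    using b by (simp add: laplace_density_def)
  note moment = has_bochner_integral_laplace_moment[OF b, of k]
  show "integrable M (\<lambda>\<omega>. X \<omega> ^ k)"
    using distributed_integrable[OF X, of "\<lambda>z. z ^ k"] nonneg moment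
    by (simp add: has_bochner_integral_iff)
  show "expectation (\<lambda>\<omega>. X \<omega> ^ k) = (1 + (-1) ^ k) * fact k * b ^ k / 2"
    using distributed_integral[OF X, of "\<lambda>z. z ^ k"] nonneg moment
    by (simp add: has_bochner_integral_iff)
qed

lemma (in prob_space) laplace_distributed_expectation:
  assumes "0 < b" "distributed M lborel X (\<lambda>z. ennreal (laplace_density b z))"
  shows "expectation X = 0"
  using laplace_distributed_moment[OF assms, of 1] by simp

lemma (in prob_space) laplace_distributed_variance:
  assumes "0 < b" "distributed M lborel X (\<lambda>z. ennreal (laplace_density b z))"
  shows "variance X = 2 * b ^ 2"
  using laplace_distributed_moment[OF assms, of 2] laplace_distributed_expectation[OF assms]
  by (simp add: variance_mean_zero)

lemma (in prob_space) indep_vars_expectation_mult: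
  fixes X :: "'i \<Rightarrow> 'a \<Rightarrow> real"
  assumes indep: "indep_vars (\<lambda>_. borel) X I" and "i \<in> I" "j \<in> I" "i \<noteq> j"
    and "integrable M (X i)" "integrable M (X j)"
  shows "integrable M (\<lambda>\<omega>. X i \<omega> * X j \<omega>)"
    and "expectation (\<lambda>\<omega>. X i \<omega> * X j \<omega>) = expectation (X i) * expectation (X j)"
proof -
  have indep_ij: "indep_vars (\<lambda>_. borel) X {i, j}"
    using indep_vars_subset[OF indep] assms by auto
  have integrable: "\<And>k. k \<in> {i, j} \<Longrightarrow> integrable M (X k)"
    using assms by auto
  have prod: "(\<Prod>k\<in>{i, j}. f k) = f i * f j" for f :: "'i \<Rightarrow> real"
    using \<open>i \<noteq> j\<close> by simp
  show "integrable M (\<lambda>\<omega>. X i \<omega> * X j \<omega>)"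
    using indep_vars_integrable[OF _ indep_ij integrable] by (simp add: prod)
  show "expectation (\<lambda>\<omega>. X i \<omega> * X j \<omega>) = expectation (X i) * expectation (X j)"
    using indep_vars_lebesgue_integral[OF _ indep_ij integrable] by (simp add: prod)
qed

lemma (in prob_space)
  fixes X :: "'i \<Rightarrow> 'a \<Rightarrow> real"
  assumes "\<And>i. i \<in> I \<Longrightarrow> integrable M (X i)" and "\<And>i. i \<in> I \<Longrightarrow> expectation (X i) = 0"
  shows integrable_weighted_sum: "integrable M (\<lambda>\<omega>. \<Sum>i\<in>I. c i * X i \<omega>)"
    and expectation_weighted_sum_centered: "expectation (\<lambda>\<omega>. \<Sum>i\<in>I. c i * X i \<omega>) = 0"
  using assms by (auto simp: Bochner_Integration.integral_sum)

lemma (in prob_space) indep_vars_variance_weighted_sum: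
  fixes X :: "'i \<Rightarrow> 'a \<Rightarrow> real"
  assumes "finite I" and indep: "indep_vars (\<lambda>_. borel) X I"
    and square_integrable: "\<And>i. i \<in> I \<Longrightarrow> integrable M (\<lambda>\<omega>. X i \<omega> ^ 2)"
    and centered: "\<And>i. i \<in> I \<Longrightarrow> expectation (X i) = 0"
  shows "variance (\<lambda>\<omega>. \<Sum>i\<in>I. c i * X i \<omega>) = (\<Sum>i\<in>I. c i ^ 2 * variance (X i))"
proof -
  have integrable: "integrable M (X i)" if "i \<in> I" for i
    using square_integrable_imp_integrable[OF _ square_integrable[OF that]] indep that
    by (simp add: indep_vars_def)
  have products: "integrable M (\<lambda>\<omega>. X i \<omega> * X j \<omega>)
      \<and> expectation (\<lambda>\<omega>. X i \<omega> * X j \<omega>) = (if i = j then variance (X i) else 0)"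
    if "i \<in> I" "j \<in> I" for i j
  proof (cases "i = j")
    case True
    then show ?thesis
      using square_integrable[OF that(1)] centered[OF that(1)] by (simp add: variance_mean_zero power2_eq_square)
  next
    case False
    then show ?thesis
      using indep_vars_expectation_mult[OF indep that False integrable integrable] that centered by simp
  qed
  have "variance (\<lambda>\<omega>. \<Sum>i\<in>I. c i * X i \<omega>)
      = expectation (\<lambda>\<omega>. \<Sum>i\<in>I. \<Sum>j\<in>I. c i * c j * (X i \<omega> * X j \<omega>))"
    using expectation_weighted_sum_centered[where I=I and X=X and c=c, OF integrable centered]
    by (simp add: variance_mean_zero power2_eq_square sum_product algebra_simps)
  also have "\<dots> = (\<Sum>i\<in>I. \<Sum>j\<in>I. c i * c j * (if i = j then variance (X i) else 0))"
    using products by (simp add: Bochner_Integration.integral_sum)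
  also have "\<dots> = (\<Sum>i\<in>I. c i ^ 2 * variance (X i))"
    using \<open>finite I\<close> by (simp add: if_distrib power2_eq_square cong: if_cong)
  finally show ?thesis .
qed

lemma sum_xy_eq_count_difference:
  fixes x y :: "'i \<Rightarrow> real"
  shows "(\<Sum>i\<in>A. x i ^ 2) + (\<Sum>i\<in>A. x i - x i ^ 2) + (\<Sum>i\<in>A. 1 - x i)
      - ((\<Sum>i\<in>A. (1 - x i) * y i) + (\<Sum>i\<in>A. 1 - y i)) = (\<Sum>i\<in>A. x i * y i)"
  by (simp add: sum.distrib[symmetric] sum_subtractf[symmetric] algebra_simps)

lemma estimator_eq_signal_plus_noise:
  fixes a b c d e s :: real
  assumes "a + b + c - (d + e) = s"
  shows "5 / 6 * (s + z\<^sub>2\<^sub>1) + 1 / 6 * (a + z\<^sub>1\<^sub>1 + (b + z\<^sub>1\<^sub>2) + (c + z\<^sub>1\<^sub>3) - (d + z\<^sub>2\<^sub>2 + (e + z\<^sub>2\<^sub>3)))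
    = s + (5 / 6 * z\<^sub>2\<^sub>1 + 1 / 6 * (z\<^sub>1\<^sub>1 + z\<^sub>1\<^sub>2 + z\<^sub>1\<^sub>3 - z\<^sub>2\<^sub>2 - z\<^sub>2\<^sub>3))"
proof -
  have "d = a + b + c - e - s" using assms by simp
  then show ?thesis by (simp add: field_simps)
qed

theorem mainTheorem9:
  fixes M :: "'a measure"
    and \<epsilon> :: real
    and n :: nat
    and x y :: "nat \<Rightarrow> real"
    and Z :: "nat \<Rightarrow> nat \<Rightarrow> 'a \<Rightarrow> real"
  assumes "prob_space M"
    and eps_pos: "\<epsilon> > 0"
    and x_range: "\<And>i. i < n \<Longrightarrow> x i \<in> {0..1}"
    and y_range: "\<And>i. i < n \<Longrightarrow> y i \<in> {0..1}"
    and Z_indep: "prob_space.indep_vars M (\<lambda>_. borel) (\<lambda>(k, j). Z k j) ({1, 2} \<times> {1, 2, 3})"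
    and Z1_dist: "\<And>j. j \<in> {1, 2, 3} \<Longrightarrow>
        distributed M lborel (Z 1 j) (\<lambda>z. ennreal (laplace_density (1 / (\<epsilon> / 2)) z))"
    and Z2_dist: "\<And>j. j \<in> {1, 2, 3} \<Longrightarrow>
        distributed M lborel (Z 2 j) (\<lambda>z. ennreal (laplace_density (1 / (\<epsilon> / 2)) z))"
  shows
    "let S_x2 = (\<Sum>i<n. x i ^ 2);
         S_x_x2 = (\<Sum>i<n. x i - x i ^ 2);
         S_1_x = (\<Sum>i<n. 1 - x i);
         S_xy = (\<Sum>i<n. x i * y i);
         S_1_x_y = (\<Sum>i<n. (1 - x i) * y i);
         S_1_y = (\<Sum>i<n. 1 - y i);
         tS_x2 = (\<lambda>\<omega>. S_x2 + Z 1 1 \<omega>);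
         tS_x_x2 = (\<lambda>\<omega>. S_x_x2 + Z 1 2 \<omega>);
         tS_1_x = (\<lambda>\<omega>. S_1_x + Z 1 3 \<omega>);
         tS_xy = (\<lambda>\<omega>. S_xy + Z 2 1 \<omega>);
         tS_1_x_y = (\<lambda>\<omega>. S_1_x_y + Z 2 2 \<omega>);
         tS_1_y = (\<lambda>\<omega>. S_1_y + Z 2 3 \<omega>);
         tn_x = (\<lambda>\<omega>. tS_x2 \<omega> + tS_x_x2 \<omega> + tS_1_x \<omega>);
         hS_xy = (\<lambda>\<omega>. 5 / 6 * tS_xy \<omega> + 1 / 6 * (tn_x \<omega> - (tS_1_x_y \<omega> + tS_1_y \<omega>)))
     in prob_space.expectation M hS_xy = S_xy
        \<and> prob_space.variance M hS_xy = 20 / (3 * \<epsilon> ^ 2)"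
proof -
  \<comment> \<open>The ranges of \<open>x\<close> and \<open>y\<close> are irrelevant: the identity behind the estimator is algebraic.\<close>
  interpret prob_space M by fact
  define b where "b = 1 / (\<epsilon> / 2)"
  define I :: "(nat \<times> nat) set" where "I = {1, 2} \<times> {1, 2, 3}"
  define X where "X = (\<lambda>(k, j). Z k j)"
  define c :: "nat \<times> nat \<Rightarrow> real" where
    "c p = (if p = (2, 1) then 5 / 6 else if fst p = 1 then 1 / 6 else - 1 / 6)" for p
  define W where "W = (\<lambda>\<omega>. \<Sum>p\<in>I. c p * X p \<omega>)"
  have "0 < b" using eps_pos by (simp add: b_def)
  have laplace: "distributed M lborel (X p) (\<lambda>z. ennreal (laplace_density b z))" if "p \<in> I" for p
    using that Z1_dist Z2_dist by (auto simp: I_def X_def b_def)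
  have integrable: "integrable M (X p)" if "p \<in> I" for p
    using laplace_distributed_integrable_power[OF \<open>0 < b\<close> laplace[OF that], of 1] by simp
  note centered = laplace_distributed_expectation[OF \<open>0 < b\<close> laplace]
  have noise: "5 / 6 * Z 2 1 \<omega> + 1 / 6 * (Z 1 1 \<omega> + Z 1 2 \<omega> + Z 1 3 \<omega> - Z 2 2 \<omega> - Z 2 3 \<omega>) = W \<omega>"
    for \<omega>
    by (simp add: W_def I_def c_def X_def)
  have "variance W = (\<Sum>p\<in>I. c p ^ 2 * variance (X p))"
    unfolding W_def using Z_indep laplace_distributed_integrable_power[OF \<open>0 < b\<close> laplace] centered
    by (intro indep_vars_variance_weighted_sum) (auto simp: I_def X_def)
  also have "\<dots> = 20 / (3 * \<epsilon> ^ 2)"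
    using eps_pos laplace_distributed_variance[OF \<open>0 < b\<close> laplace]
    by (simp add: I_def c_def b_def field_simps power2_eq_square)
  finally show ?thesis
    unfolding Let_def estimator_eq_signal_plus_noise[OF sum_xy_eq_count_difference] noise
    using integrable_weighted_sum[where I=I and X=X and c=c, OF integrable centered, folded W_def]
      expectation_weighted_sum_centered[where I=I and X=X and c=c, OF integrable centered, folded W_def] prob_space
    by simp
qed

end
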